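(* Let $k\ge2$ and let $G=(\{a,b\},\varphi,a)$ be a circular D0L-system with $\varphi$ $k$-uniform. Then the graph of overhangs $GO_G$ does not contain two distinct vertices $s_1,s_2$ with an edge from $s_1$ to $s_2$, an edge from $s_2$ to $s_1$, and a loop on $s_1$ or on $s_2$.
   Context: A D0L-system $G=(\mathcal{A},\varphi,w)$ has $L(G)=\{\varphi^n(w)\}$ and $S(L(G))$ the set of factors of its words. An interpretation of $u\in S(L(G))$ is $(p,v,s)$ with $v\in S(L(G))$, $\varphi(v)=pus$. With $v=v_1\cdots v_n$, $v'=v'_1\cdots v'_m$, $u=u_1\cdots u_\ell$, interpretations $(p,v,s),(p',v',s')$ are synchronized at position $j$ if $\varphi(v_1\cdots v_i)=pu_1\cdots u_j$ and $\varphi(v'_1\cdots v'_{i'})=p'u_1\cdots u_j$ for some $i,i'$; $u$ has a synchronizing point at $j$ if all its interpretations are pairwise synchronized at $j$. A PD0L-system injective on $S(L(G))$ is circular if there is $Z$ such that every $u\in S(L(G))$ with $|u|>Z$ has a synchronizing point. $\varphi$ is $k$-uniform if $|\varphi(a)|=|\varphi(b)|=k$. Let $X=\{\varphi(a),\varphi(b)\}$. An overhang is a triple $(u_1\cdots u_m,v_1\cdots v_n,|x|)$ with $u_i,v_j\in X$, $x$ nonempty, such that: (i) $x$ is a suffix of $u_1\cdots u_m$ but not of $u_2\cdots u_m$; (ii) $x$ is a prefix of $v_1\cdots v_n$ but not of $v_1\cdots v_{n-1}$; (iii) $x\ne u_1\cdots u_m$ or $x\ne v_1\cdots v_n$; (iv)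 $|v_1\cdots v_{n-1}|<|x(u_2\cdots u_m)^{-1}|$. Its left overhang is $u_1\cdots u_mx^{-1}$, right overhang $x^{-1}v_1\cdots v_n$. $GO_G$ has an edge from $s_1$ to $s_2$ labelled by each overhang with left overhang $s_1$ and right overhang $s_2$. *)

theory Defs
  imports Main "HOL-Library.Sublist"
begin

datatype letter = LA | LB

type_synonym word = "letter list"

definition morph :: "(letter \<Rightarrow> word) \<Rightarrow> word \<Rightarrow> word" where
  "morph \<phi> w = concat (map \<phi> w)"

definition D0L_lang :: "(letter \<Rightarrow> word) \<Rightarrow> word \<Rightarrow> word set" where
  "D0L_lang \<phi> w = {(morph \<phi> ^^ n) w | n. True}"

definition factors :: "word set \<Rightarrow> word set" where
  "factors L = {u. \<exists>z\<in>L. \<exists>p s. z = p @ u @ s}"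

definition is_interp :: "(letter \<Rightarrow> word) \<Rightarrow> word \<Rightarrow> word \<Rightarrow> word \<times> word \<times> word \<Rightarrow> bool" where
  "is_interp \<phi> w u I = (case I of (p, v, s) \<Rightarrow>
      v \<in> factors (D0L_lang \<phi> w) \<and> morph \<phi> v = p @ u @ s)"

definition synchronized_at :: "(letter \<Rightarrow> word) \<Rightarrow> word \<Rightarrow> word \<times> word \<times> word \<Rightarrow> word \<times> word \<times> word \<Rightarrow> nat \<Rightarrow> bool" where
  "synchronized_at \<phi> u I I' j = (case I of (p, v, s) \<Rightarrow> case I' of (p', v', s') \<Rightarrow>
      (\<exists>i \<le> length v. \<exists>i' \<le> length v'.
          morph \<phi> (take i v) = p @ take j u \<and> morph \<phi> (take i' v') = p' @ take j u))"

definition has_sync_point_at :: "(letter \<Rightarrow> word) \<Rightarrow> word \<Rightarrow> word \<Rightarrow> nat \<Rightarrow> bool" where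
  "has_sync_point_at \<phi> w u j = (j \<le> length u \<and>
      (\<forall>I I'. is_interp \<phi> w u I \<longrightarrow> is_interp \<phi> w u I' \<longrightarrow> synchronized_at \<phi> u I I' j))"

definition has_sync_point :: "(letter \<Rightarrow> word) \<Rightarrow> word \<Rightarrow> word \<Rightarrow> bool" where
  "has_sync_point \<phi> w u = (\<exists>j. has_sync_point_at \<phi> w u j)"

definition circular :: "(letter \<Rightarrow> word) \<Rightarrow> word \<Rightarrow> bool" where
  "circular \<phi> w = ((\<forall>c. \<phi> c \<noteq> []) \<and> inj_on (morph \<phi>) (factors (D0L_lang \<phi> w)) \<and>
      (\<exists>Z. \<forall>u \<in> factors (D0L_lang \<phi> w). length u > Z \<longrightarrow> has_sync_point \<phi> w u))"

definition uniform :: "(letter \<Rightarrow> word) \<Rightarrow> nat \<Rightarrow> bool" where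
  "uniform \<phi> k = (length (\<phi> LA) = k \<and> length (\<phi> LB) = k)"

text \<open>Overhang (us, vs, l), where us = [u_1,...,u_m], vs = [v_1,...,v_n] are lists of
  blocks from X = {phi a, phi b} and l = |x|.\<close>
definition overhang :: "(letter \<Rightarrow> word) \<Rightarrow> word list \<Rightarrow> word list \<Rightarrow> nat \<Rightarrow> bool" where
  "overhang \<phi> us vs l = (set us \<subseteq> {\<phi> LA, \<phi> LB} \<and> set vs \<subseteq> {\<phi> LA, \<phi> LB} \<and>
     (\<exists>x. l = length x \<and> x \<noteq> [] \<and>
        suffix x (concat us) \<and> \<not> suffix x (concat (tl us)) \<and>
        prefix x (concat vs) \<and> \<not> prefix x (concat (butlast vs)) \<and>
        (x \<noteq> concat us \<or> x \<noteq> concat vs) \<and>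
        length (concat (butlast vs)) < length x - length (concat (tl us))))"

definition left_overhang :: "word list \<Rightarrow> nat \<Rightarrow> word" where
  "left_overhang us l = take (length (concat us) - l) (concat us)"

definition right_overhang :: "word list \<Rightarrow> nat \<Rightarrow> word" where
  "right_overhang vs l = drop l (concat vs)"

definition GO_edge :: "(letter \<Rightarrow> word) \<Rightarrow> word \<Rightarrow> word \<Rightarrow> bool" where
  "GO_edge \<phi> s1 s2 = (\<exists>us vs l. overhang \<phi> us vs l \<and>
      left_overhang us l = s1 \<and> right_overhang vs l = s2)"

end

theory Submission
  imports Defs
begin

text \<open>For a uniform morphism condition (iv) of an overhang forces both sides to consist of a single
  block, so an edge from \<open>s\<^sub>1\<close> to \<open>s\<^sub>2\<close> only says that \<open>s\<^sub>1 x\<close> and \<open>x s\<^sub>2\<close> are images of letters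
  for some nonempty \<open>x\<close>. As all images have the same length, the two edges between \<open>s\<^sub>1 \<noteq> s\<^sub>2\<close>
  together with a loop force a common \<open>x\<close> such that either \<open>s\<^sub>1 x = x s\<^sub>2\<close> and
  \<open>s\<^sub>2 x = x s\<^sub>1\<close>, or both \<open>s\<^sub>i\<close> commute with \<open>x\<close>;
  in both cases \<open>s\<^sub>1\<close> and \<open>s\<^sub>2\<close> commute with \<open>x x\<close>, and two words of equal length commuting with
  the same nonempty word coincide.\<close>

lemma length_concat_uniform:
  "\<forall>w\<in>set ws. length w = k \<Longrightarrow> length (concat ws) = k * length ws"
  by (induction ws) auto

lemma suffix_append_not_suffix_length:
  assumes "suffix x (u @ v)" "\<not> suffix x v"
  shows "length v < length x"
  using suffix_length_suffix[OF assms(1), of v] assms(2) by (force intro: suffix_appendI)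

lemma prefix_append_not_prefix_length:
  assumes "prefix x (u @ v)" "\<not> prefix x u"
  shows "length u < length x"
  using prefix_length_prefix[OF assms(1), of u] assms(2) by force

lemma overhang_uniform_single_blocks:
  assumes unif: "uniform \<phi> k" and ov: "overhang \<phi> us vs l"
  shows "\<exists>u v x. us = [u] \<and> vs = [v] \<and> u = left_overhang us l @ x \<and>
           v = x @ right_overhang vs l \<and> x \<noteq> [] \<and> u \<in> {\<phi> LA, \<phi> LB} \<and> v \<in> {\<phi> LA, \<phi> LB}"
proof -
  from ov obtain x where us_blocks: "set us \<subseteq> {\<phi> LA, \<phi> LB}"
    and vs_blocks: "set vs \<subseteq> {\<phi> LA, \<phi> LB}" and l: "l = length x" and "x \<noteq> []"
    and suf: "suffix x (concat us)" and not_suf: "\<not> suffix x (concat (tl us))"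
    and pre: "prefix x (concat vs)" and not_pre: "\<not> prefix x (concat (butlast vs))"
    and overlap: "length (concat (butlast vs)) < length x - length (concat (tl us))"
    unfolding overhang_def by blast
  have block_length: "\<forall>w\<in>{\<phi> LA, \<phi> LB}. length w = k"
    using unif unfolding uniform_def by auto
  obtain u us' where us: "us = u # us'"
    using suf \<open>x \<noteq> []\<close> by (cases us) (auto simp: suffix_def)
  obtain vs' v where vs: "vs = vs' @ [v]"
    using pre \<open>x \<noteq> []\<close> by (cases vs rule: rev_cases) (auto simp: prefix_def)
  have u: "u \<in> {\<phi> LA, \<phi> LB}" "length u = k" and v: "v \<in> {\<phi> LA, \<phi> LB}" "length v = k"
    using us_blocks vs_blocks block_length us vs by auto
  have len_us': "length (concat us') = k * length us'"
    using us_blocks block_length us by (intro length_concat_uniform) auto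
  have len_vs': "length (concat vs') = k * length vs'"
    using vs_blocks block_length vs by (intro length_concat_uniform) auto
  have "length x \<le> k + length (concat (tl us))"
    using suffix_length_le[OF suf] us u by simp
  moreover have "length (concat (butlast vs)) = k * length vs'" using vs len_vs' by simp
  ultimately have "k * length vs' < k" using overlap by linarith
  then have vs': "vs' = []" by (cases vs') auto
  have "length (concat us') < length x"
    using suffix_append_not_suffix_length[of x u "concat us'"] suf not_suf us by simp
  moreover have "length x \<le> k"
    using prefix_length_le[OF pre] vs vs' v by simp
  ultimately have "k * length us' < k" using len_us' by linarith
  then have us': "us' = []" by (cases us') auto
  have "u = left_overhang us l @ x"
    using suf us us' l unfolding left_overhang_def suffix_def by auto
  moreover have "v = x @ right_overhang vs l"
    using pre vs vs' l unfolding right_overhang_def prefix_def by auto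
  moreover have "us = [u]" "vs = [v]" using us us' vs vs' by simp_all
  ultimately show ?thesis using u v \<open>x \<noteq> []\<close> by blast
qed

lemma GO_edge_uniform_blocks:
  assumes "uniform \<phi> k" "GO_edge \<phi> s1 s2"
  shows "\<exists>x. x \<noteq> [] \<and> s1 @ x \<in> {\<phi> LA, \<phi> LB} \<and> x @ s2 \<in> {\<phi> LA, \<phi> LB}"
  using assms overhang_uniform_single_blocks unfolding GO_edge_def by metis

lemma append_concat_replicate_commute:
  assumes "u @ w = w @ u"
  shows "u @ concat (replicate n w) = concat (replicate n w) @ u"
proof (induction n)
  case (Suc n)
  have "u @ concat (replicate (Suc n) w) = (u @ w) @ concat (replicate n w)" by simp
  also have "\<dots> = w @ u @ concat (replicate n w)" using assms by simp
  also have "\<dots> = concat (replicate (Suc n) w) @ u" using Suc by simp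
  finally show ?case .
qed simp

text \<open>Both words are the prefix of length \<open>|u|\<close> of a sufficiently high power of \<open>w\<close>.\<close>
lemma commuting_same_length_eq:
  assumes "u @ w = w @ u" "v @ w = w @ v" "w \<noteq> []" "length u = length v"
  shows "u = v"
proof -
  let ?W = "concat (replicate (length u) w)"
  have "length u \<le> length ?W"
    using assms(3) by (cases w) (simp_all add: length_concat sum_list_replicate)
  moreover have "take (length u) (u @ ?W) = take (length u) (?W @ u)"
    "take (length v) (v @ ?W) = take (length v) (?W @ v)"
    using append_concat_replicate_commute[OF assms(1)] append_concat_replicate_commute[OF assms(2)]
    by simp_all
  ultimately have "u = take (length u) ?W" "v = take (length u) ?W"
    using assms(4) by simp_all
  then show ?thesis by simp
qed

lemma conjugate_pair_commutes_square:
  assumes "s @ x = x @ t" "t @ x = x @ s"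
  shows "s @ x @ x = (x @ x) @ s"
proof -
  have "s @ x @ x = (x @ t) @ x" using assms(1) by simp
  also have "\<dots> = x @ x @ s" using assms(2) by simp
  finally show ?thesis by simp
qed

lemma mem_doubleton_distinct_cases:
  "a \<in> {p, q} \<Longrightarrow> b \<in> {p, q} \<Longrightarrow> c \<in> {p, q} \<Longrightarrow> b \<noteq> c \<Longrightarrow> a = b \<or> a = c"
  by auto

lemma GO_two_cycle_with_loop_uniform:
  assumes unif: "uniform \<phi> k" and "s1 \<noteq> s2"
    and "GO_edge \<phi> s1 s2" "GO_edge \<phi> s2 s1" "GO_edge \<phi> s1 s1"
  shows False
proof -
  let ?X = "{\<phi> LA, \<phi> LB}"
  have len: "\<And>w. w \<in> ?X \<Longrightarrow> length w = k" using unif unfolding uniform_def by auto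
  obtain x where x: "x \<noteq> []" "s1 @ x \<in> ?X" "x @ s2 \<in> ?X"
    using GO_edge_uniform_blocks[OF unif \<open>GO_edge \<phi> s1 s2\<close>] by blast
  obtain y where y: "s2 @ y \<in> ?X" "y @ s1 \<in> ?X"
    using GO_edge_uniform_blocks[OF unif \<open>GO_edge \<phi> s2 s1\<close>] by blast
  obtain z where z: "s1 @ z \<in> ?X" "z @ s1 \<in> ?X"
    using GO_edge_uniform_blocks[OF unif \<open>GO_edge \<phi> s1 s1\<close>] by blast
  have same_length: "length s1 = length s2" "length y = length x" "length z = length x"
    using len[OF x(2)] len[OF x(3)] len[OF y(1)] len[OF z(1)] by simp_all
  have starts_differ: "s1 @ x \<noteq> s2 @ y" "s1 @ z \<noteq> s2 @ y"
    using \<open>s1 \<noteq> s2\<close> same_length by auto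
  have ends_differ: "x @ s2 \<noteq> y @ s1"
    using \<open>s1 \<noteq> s2\<close> same_length by auto
  have "s1 @ z = s1 @ x"
    using mem_doubleton_distinct_cases[OF z(1) x(2) y(1) starts_differ(1)] starts_differ(2) by blast
  then have "z = x" by simp
  with \<open>s1 \<noteq> s2\<close> have "z @ s1 \<noteq> x @ s2" by simp
  then have "z @ s1 = y @ s1"
    using mem_doubleton_distinct_cases[OF z(2) x(3) y(2) ends_differ] by blast
  with \<open>z = x\<close> have "y = x" by simp
  have "s1 @ x = x @ s2 \<or> s1 @ x = x @ s1" "s2 @ x = x @ s2 \<or> s2 @ x = x @ s1"
    using mem_doubleton_distinct_cases[OF x(2) x(3) y(2) ends_differ]
      mem_doubleton_distinct_cases[OF y(1) x(3) y(2) ends_differ] \<open>y = x\<close> by simp_all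
  moreover have "s1 @ x \<noteq> s2 @ x" using \<open>s1 \<noteq> s2\<close> by simp
  ultimately have "(s1 @ x = x @ s2 \<and> s2 @ x = x @ s1) \<or> (s1 @ x = x @ s1 \<and> s2 @ x = x @ s2)"
    by metis
  then have "s1 @ x @ x = (x @ x) @ s1" "s2 @ x @ x = (x @ x) @ s2"
    using conjugate_pair_commutes_square by blast+
  then have "s1 = s2"
    using commuting_same_length_eq[of s1 "x @ x" s2] x(1) same_length(1) by simp
  with \<open>s1 \<noteq> s2\<close> show False ..
qed

theorem mainTheorem7:
  fixes \<phi> :: "letter \<Rightarrow> word" and k :: nat
  assumes "k \<ge> 2"
    and "circular \<phi> [LA]"
    and "uniform \<phi> k"
  shows "\<not> (\<exists>s1 s2. s1 \<noteq> s2 \<and> GO_edge \<phi> s1 s2 \<and> GO_edge \<phi> s2 s1 \<and>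
                 (GO_edge \<phi> s1 s1 \<or> GO_edge \<phi> s2 s2))"
  using GO_two_cycle_with_loop_uniform[OF assms(3)] by metis

end
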